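(* Let $\mathcal I=(\Omega,\mathbb P,\mathcal S,\mathcal T,Y)$ be an information structure that satisfies rectangle substitutes, and let $\epsilon=\mathbb E[(\mu_\sigma-\mu_\tau)^2]$. Then $\mathbb E[(\mu_{\sigma\tau}-\mu_\tau)^2]\le 6\epsilon^{1/3}$.
   Context: An information structure is a tuple $\mathcal I=(\Omega,\mathbb P,\mathcal S,\mathcal T,Y)$: a probability space $(\Omega,\mathbb P)$, random variables $\sigma:\Omega\to\mathcal S$ (Alice's signal), $\tau:\Omega\to\mathcal T$ (Bob's signal), and $Y:\Omega\to[0,1]$. Notation: $\mu_{\sigma\tau}=\mathbb E[Y\mid\sigma,\tau]$, $\mu_\sigma=\mathbb E[Y\mid\sigma]$, $\mu_\tau=\mathbb E[Y\mid\tau]$; for measurable $S\subseteq\mathcal S$, $T\subseteq\mathcal T$: $\mu_{\sigma T}=\mathbb E[Y\mid\sigma,\tau\in T]$, $\mu_{S\tau}=\mathbb E[Y\mid\sigma\in S,\tau]$, $\mu_{ST}=\mathbb E[Y\mid\sigma\in S,\tau\in T]$; $\mathbb E[\cdot\mid S,T]$ denotes conditioning on $\{\sigma\in S,\tau\in T\}$. $\mathcal I$ satisfies rectangle substitutes if for all measurable $S\subseteq\mathcal S$, $T\subseteq\mathcal T$ with $\mathbb P(\sigma\in S,\tau\in T)>0$: $\mathbb E[(Y-\mu_{S\tau})^2\mid S,T]-\mathbb E[(Y-\mu_{\sigma\tau})^2\mid S,T]\le \mathbb E[(Y-\mu_{ST})^2\mid S,T]-\mathbb E[(Y-\mu_{\sigma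 T})^2\mid S,T]$. *)

theory Defs
  imports "HOL-Probability.Probability"
begin

definition cexp_rv :: "'w measure \<Rightarrow> ('w \<Rightarrow> 'x) \<Rightarrow> 'x measure \<Rightarrow> ('w \<Rightarrow> real) \<Rightarrow> ('w \<Rightarrow> real)" where
  "cexp_rv M X N Y = real_cond_exp M (vimage_algebra (space M) X N) Y"

definition rect_event :: "'w measure \<Rightarrow> ('w \<Rightarrow> 's) \<Rightarrow> ('w \<Rightarrow> 't) \<Rightarrow> 's set \<Rightarrow> 't set \<Rightarrow> 'w set" where
  "rect_event M sig tau S T = {w \<in> space M. sig w \<in> S \<and> tau w \<in> T}"

text \<open>Conditioning on an event A is done via the conditional probability measure
  uniform_measure M A (i.e. P(. | A)).\<close>
definition rectangle_substitutes ::
  "'w measure \<Rightarrow> 's measure \<Rightarrow> 't measure \<Rightarrow> ('w \<Rightarrow> 's) \<Rightarrow> ('w \<Rightarrow> 't) \<Rightarrow> ('w \<Rightarrow> real) \<Rightarrow> bool" where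
  "rectangle_substitutes M SS TT sig tau Y \<longleftrightarrow>
    (\<forall>S \<in> sets SS. \<forall>T \<in> sets TT. measure M (rect_event M sig tau S T) > 0 \<longrightarrow>
      (let A = rect_event M sig tau S T;
           MA = uniform_measure M A;
           \<mu>\<sigma>\<tau> = cexp_rv M (\<lambda>w. (sig w, tau w)) (SS \<Otimes>\<^sub>M TT) Y;
           \<mu>S\<tau> = cexp_rv (uniform_measure M (rect_event M sig tau S (space TT))) tau TT Y;
           \<mu>\<sigma>T = cexp_rv (uniform_measure M (rect_event M sig tau (space SS) T)) sig SS Y;
           \<mu>ST = (\<integral>w. Y w \<partial>MA)
       in (\<integral>w. (Y w - \<mu>S\<tau> w)\<^sup>2 \<partial>MA) - (\<integral>w. (Y w - \<mu>\<sigma>\<tau> w)\<^sup>2 \<partial>MA)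
          \<le> (\<integral>w. (Y w - \<mu>ST)\<^sup>2 \<partial>MA) - (\<integral>w. (Y w - \<mu>\<sigma>T w)\<^sup>2 \<partial>MA)))"

end

theory Submission
  imports Defs
begin

text \<open>Write \<mu>\<sigma>, \<mu>\<tau>, \<mu>\<sigma>\<tau> for the conditional expectations of Y. Fix a width \<delta> and an offset u and cut
  \<Omega> into the \<sigma>-measurable cells on which \<mu>\<sigma> lies in [u + k\<delta>, u + (k + 1)\<delta>). On such a cell,
  rectangle substitutes for the strip {\<sigma> \<in> S} \<times> \<T> compares two gains of learning \<sigma>: on top of \<tau>,
  which by Pythagoras is the mean squared distance between \<mu>\<sigma>\<tau> and the cell's own \<tau>-predictor,
  and on top of nothing, which is the variance of \<mu>\<sigma> on the cell, at most \<delta>^2. Choosing the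
  cell's predictor by the cell of \<mu>\<tau> instead of \<mu>\<sigma> gives a \<tau>-measurable predictor G, and \<mu>\<tau> is
  at least as close to \<mu>\<sigma>\<tau> as G. G differs from the cellwise predictor only where \<mu>\<sigma> and \<mu>\<tau>
  fall into different cells, so E[(\<mu>\<sigma>\<tau> - \<mu>\<tau>)^2] \<le> 2\<delta>^2 + 2 P(crossing). Averaged over the
  offset u, the crossing probability is at most E|\<mu>\<sigma> - \<mu>\<tau>|/\<delta> \<le> \<surd>\<epsilon>/\<delta>, and
  \<delta> = \<epsilon> powr (1/6) gives the bound 4 \<epsilon> powr (1/3).\<close>

lemma power2_diff_unit_le_1:
  fixes x y :: real
  assumes "0 \<le> x" "x \<le> 1" "0 \<le> y" "y \<le> 1"
  shows "(x - y)\<^sup>2 \<le> 1"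
  using assms by (simp add: abs_square_le_1 abs_le_iff)

lemma abs_diff_mult_unit_le_1:
  fixes a b c :: real
  assumes "0 \<le> a" "a \<le> 1" "0 \<le> b" "b \<le> 1" "0 \<le> c" "c \<le> 1"
  shows "\<bar>(a - b) * c\<bar> \<le> 1"
proof -
  have "\<bar>(a - b) * c\<bar> = \<bar>a - b\<bar> * \<bar>c\<bar>"
    by (simp add: abs_mult)
  also have "\<dots> \<le> 1 * 1"
    using assms by (intro mult_mono) auto
  finally show ?thesis
    by simp
qed

lemma power2_diff_le_twice_sum:
  fixes a b c :: real
  shows "(a - c)\<^sup>2 \<le> 2 * (a - b)\<^sup>2 + 2 * (b - c)\<^sup>2"
proof -
  have "0 \<le> (a - 2 * b + c)\<^sup>2"
    by simp
  then show ?thesis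
    by (simp add: power2_eq_square algebra_simps)
qed

lemma le_powr_third_of_tradeoff:
  fixes L e :: real
  assumes e: "0 \<le> e" and tradeoff: "\<And>\<delta>. \<delta> > 0 \<Longrightarrow> L \<le> 2 * \<delta>\<^sup>2 + 2 * sqrt e / \<delta>"
  shows "L \<le> 4 * e powr (1/3)"
proof (cases "e = 0")
  case True
  have "L \<le> 0 + t" if "t > 0" for t
    using tradeoff[of "sqrt (t / 2)"] that True by simp
  then show ?thesis
    using True by (auto intro: field_le_epsilon)
next
  case False
  then have "e > 0"
    using e by simp
  then have "(e powr (1/6))\<^sup>2 = e powr (1/3)" "sqrt e / e powr (1/6) = e powr (1/3)"
    by (simp_all add: power2_eq_square powr_add[symmetric] powr_half_sqrt[symmetric]
        powr_diff[symmetric])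
  then show ?thesis
    using tradeoff[of "e powr (1/6)"] \<open>e > 0\<close> by simp
qed

definition bin :: "real \<Rightarrow> real \<Rightarrow> real \<Rightarrow> int" where
  "bin \<delta> u x = \<lfloor>(x - u) / \<delta>\<rfloor>"

lemma bin_unit_interval:
  assumes "\<delta> > 0" "0 \<le> x" "x \<le> 1"
  shows "bin \<delta> u x \<in> {bin \<delta> u 0 .. bin \<delta> u 1}"
proof -
  have "(0 - u) / \<delta> \<le> (x - u) / \<delta>" "(x - u) / \<delta> \<le> (1 - u) / \<delta>"
    using assms by (intro divide_right_mono; simp)+
  then show ?thesis
    unfolding bin_def by (auto intro: floor_mono)
qed

lemma bin_eqD:
  assumes "\<delta> > 0" "bin \<delta> u x = k"
  shows "u + k * \<delta> \<le> x \<and> x \<le> u + k * \<delta> + \<delta>"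
proof -
  have "k \<le> (x - u) / \<delta>" "(x - u) / \<delta> < k + 1"
    using assms(2) by (auto simp: bin_def floor_eq_iff)
  then show ?thesis
    using assms(1) by (simp add: field_simps)
qed

lemma borel_measurable_bin [measurable]: "bin \<delta> u \<in> borel \<rightarrow>\<^sub>M count_space UNIV"
  unfolding bin_def by measurable

text \<open>The map r \<mapsto> m \<lfloor>b - r/m\<rfloor> + r is injective (it recovers r as its residue mod m) and sends
  every crossing shift r to an integer in the interval (m a, m b].\<close>
lemma card_shift_crossings_le:
  fixes a b :: real and m :: nat
  assumes m: "m > 0" and ab: "a \<le> b"
  shows "real (card {r \<in> {..<m}. \<lfloor>a - r / m\<rfloor> \<noteq> \<lfloor>b - r / m\<rfloor>}) \<le> m * (b - a) + 1"
proof -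
  define R where "R = {r \<in> {..<m}. \<lfloor>a - r / m\<rfloor> \<noteq> \<lfloor>b - r / m\<rfloor>}"
  define j where "j r = int m * \<lfloor>b - r / m\<rfloor> + int r" for r :: nat
  have "inj_on j R"
  proof (rule inj_onI)
    fix r r' assume "r \<in> R" "r' \<in> R" "j r = j r'"
    moreover have "j r mod int m = int r" if "r < m" for r
      using that unfolding j_def by simp
    ultimately show "r = r'"
      by (metis (no_types, lifting) R_def lessThan_iff mem_Collect_eq of_nat_eq_iff)
  qed
  moreover have "j ` R \<subseteq> {\<lfloor>m * a\<rfloor> + 1 .. \<lfloor>m * b\<rfloor>}"
  proof
    fix y assume "y \<in> j ` R"
    then obtain r where r: "r \<in> R" and y: "y = j r" by auto
    define n where "n = \<lfloor>b - r / m\<rfloor>"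
    have "\<lfloor>a - r / m\<rfloor> \<le> n"
      unfolding n_def using ab by (intro floor_mono) simp
    with r have "\<lfloor>a - r / m\<rfloor> < n"
      by (simp add: R_def n_def)
    then have "a - r / m < n"
      by (simp add: floor_less_iff)
    then have "m * a < real_of_int (int m * n + int r)"
      using m by (simp add: field_simps)
    then have "\<lfloor>m * a\<rfloor> < int m * n + int r"
      by (simp only: floor_less_iff)
    then have lo: "\<lfloor>m * a\<rfloor> + 1 \<le> int m * n + int r"
      by simp
    have "n \<le> b - r / m"
      unfolding n_def by simp
    then have "real_of_int (int m * n + int r) \<le> m * b"
      using m by (simp add: field_simps)
    then have hi: "int m * n + int r \<le> \<lfloor>m * b\<rfloor>"
      by (simp only: le_floor_iff)
    show "y \<in> {\<lfloor>m * a\<rfloor> + 1 .. \<lfloor>m * b\<rfloor>}"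
      using lo hi by (simp add: y j_def n_def)
  qed
  ultimately have "card R \<le> card {\<lfloor>m * a\<rfloor> + 1 .. \<lfloor>m * b\<rfloor>}"
    by (intro card_inj_on_le) auto
  then have "real (card R) \<le> real (nat (\<lfloor>m * b\<rfloor> - \<lfloor>m * a\<rfloor>))"
    by simp
  also have "\<dots> \<le> m * (b - a) + 1"
  proof -
    have "\<lfloor>m * a\<rfloor> \<le> \<lfloor>m * b\<rfloor>"
      using ab by (intro floor_mono mult_left_mono) auto
    then have "real (nat (\<lfloor>m * b\<rfloor> - \<lfloor>m * a\<rfloor>)) = \<lfloor>m * b\<rfloor> - \<lfloor>m * a\<rfloor>"
      by simp
    moreover have "\<lfloor>m * b\<rfloor> \<le> m * b" "m * a < \<lfloor>m * a\<rfloor> + 1"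
      by simp_all
    ultimately show ?thesis
      unfolding right_diff_distrib by linarith
  qed
  finally show ?thesis
    by (simp add: R_def)
qed

lemma card_shift_crossings_le_abs:
  fixes a b :: real and m :: nat
  assumes "m > 0"
  shows "real (card {r \<in> {..<m}. \<lfloor>a - r / m\<rfloor> \<noteq> \<lfloor>b - r / m\<rfloor>}) \<le> m * \<bar>a - b\<bar> + 1"
proof (cases "a \<le> b")
  case True
  then show ?thesis
    using card_shift_crossings_le[OF assms True] by simp
next
  case False
  then show ?thesis
    using card_shift_crossings_le[OF assms, of b a] by (simp add: eq_commute)
qed

text \<open>real_cond_exp takes values in [0,1] only almost everywhere; clamping yields a version that
  does so everywhere, which makes all integrability side conditions below a matter of boundedness.\<close>
definition clamp01 :: "real \<Rightarrow> real" where
  "clamp01 x = max 0 (min 1 x)"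

lemma clamp01_range [simp]: "0 \<le> clamp01 x" "clamp01 x \<le> 1"
  by (auto simp: clamp01_def)

lemma clamp01_id: "0 \<le> x \<Longrightarrow> x \<le> 1 \<Longrightarrow> clamp01 x = x"
  by (auto simp: clamp01_def)

lemma borel_measurable_clamp01 [measurable (raw)]:
  "f \<in> borel_measurable N \<Longrightarrow> (\<lambda>w. clamp01 (f w)) \<in> borel_measurable N"
  unfolding clamp01_def by (intro borel_measurable_max borel_measurable_min) auto

definition unit_cond_exp :: "'a measure \<Rightarrow> 'a measure \<Rightarrow> ('a \<Rightarrow> real) \<Rightarrow> ('a \<Rightarrow> real) \<Rightarrow> bool" where
  "unit_cond_exp M F Y W \<longleftrightarrow> W \<in> borel_measurable F \<and> (\<forall>w \<in> space M. 0 \<le> W w \<and> W w \<le> 1) \<and>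
     (\<forall>h B. h \<in> borel_measurable F \<longrightarrow> (\<forall>w \<in> space M. \<bar>h w\<bar> \<le> B) \<longrightarrow>
        (\<integral>w. h w * Y w \<partial>M) = (\<integral>w. h w * W w \<partial>M))"

lemma unit_cond_exp_measurable:
  "unit_cond_exp M F Y W \<Longrightarrow> subalgebra M F \<Longrightarrow> W \<in> borel_measurable M"
  unfolding unit_cond_exp_def using measurable_from_subalg by blast

lemma unit_cond_exp_range:
  "unit_cond_exp M F Y W \<Longrightarrow> w \<in> space M \<Longrightarrow> 0 \<le> W w \<and> W w \<le> 1"
  unfolding unit_cond_exp_def by blast

lemma unit_cond_exp_integral_mult:
  "unit_cond_exp M F Y W \<Longrightarrow> h \<in> borel_measurable F \<Longrightarrow> (\<And>w. w \<in> space M \<Longrightarrow> \<bar>h w\<bar> \<le> B) \<Longrightarrow>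
    (\<integral>w. h w * Y w \<partial>M) = (\<integral>w. h w * W w \<partial>M)"
  unfolding unit_cond_exp_def by blast

lemma unit_cond_exp_tower:
  assumes sub: "subalgebra F F'" and W: "unit_cond_exp M F Y W" and Z: "unit_cond_exp M F' Y Z"
  shows "unit_cond_exp M F' W Z"
  unfolding unit_cond_exp_def
proof (intro conjI allI impI)
  fix h :: "'a \<Rightarrow> real" and B :: real
  assume h: "h \<in> borel_measurable F'" "\<forall>w\<in>space M. \<bar>h w\<bar> \<le> B"
  then have "(\<integral>w. h w * W w \<partial>M) = (\<integral>w. h w * Y w \<partial>M)"
    using measurable_from_subalg[OF sub h(1)] unit_cond_exp_integral_mult[OF W] by metis
  also have "\<dots> = (\<integral>w. h w * Z w \<partial>M)"
    using h unit_cond_exp_integral_mult[OF Z] by metis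
  finally show "(\<integral>w. h w * W w \<partial>M) = (\<integral>w. h w * Z w \<partial>M)" .
qed (use Z in \<open>auto simp: unit_cond_exp_def\<close>)

lemma subalgebra_vimage_algebra:
  "f \<in> M \<rightarrow>\<^sub>M N \<Longrightarrow> subalgebra M (vimage_algebra (space M) f N)"
  unfolding subalgebra_def using sets_image_in_sets[OF refl] by auto

context prob_space
begin

lemma integrable_bounded:
  fixes f :: "'a \<Rightarrow> real"
  assumes "f \<in> borel_measurable M" "\<And>w. w \<in> space M \<Longrightarrow> \<bar>f w\<bar> \<le> B"
  shows "integrable M f"
  using assms by (intro integrable_const_bound[where B=B]) auto

lemma integral_uniform_measure:
  fixes f :: "'a \<Rightarrow> real"
  assumes A: "A \<in> sets M" and pos: "prob A > 0" and f: "f \<in> borel_measurable M"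
  shows "(\<integral>w. f w \<partial>uniform_measure M A) = (\<integral>w. indicator A w * f w \<partial>M) / prob A"
proof -
  have "uniform_measure M A = density M (\<lambda>w. ennreal (indicator A w / prob A))"
    unfolding uniform_measure_def
    by (intro arg_cong[where f="density M"] ext)
       (auto simp: emeasure_eq_measure divide_ennreal[symmetric] pos split: split_indicator)
  then have "(\<integral>w. f w \<partial>uniform_measure M A) = (\<integral>w. (indicator A w / prob A) *\<^sub>R f w \<partial>M)"
    using A f pos by (simp add: integral_density)
  then show ?thesis
    by simp
qed

lemma uniform_measure_space_eq: "uniform_measure M (space M) = M"
proof (rule measure_eqI)
  fix B assume "B \<in> sets (uniform_measure M (space M))"
  then have "B \<in> sets M" "space M \<inter> B = B"
    using sets.sets_into_space by auto
  then show "emeasure (uniform_measure M (space M)) B = emeasure M B"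
    by (simp add: emeasure_space_1 divide_ennreal_def)
qed simp

lemma real_cond_exp_AE_eq_clamp01:
  assumes "subalgebra M F" and [measurable]: "Y \<in> borel_measurable M"
    and Y: "\<And>w. w \<in> space M \<Longrightarrow> 0 \<le> Y w \<and> Y w \<le> 1"
  shows "AE w in M. real_cond_exp M F Y w = clamp01 (real_cond_exp M F Y w)"
proof -
  interpret finite_measure_subalgebra M F
    by unfold_locales fact
  have "integrable M Y"
    by (rule integrable_bounded[where B=1]) (use Y in auto)
  then have "AE w in M. 0 \<le> real_cond_exp M F Y w" "AE w in M. real_cond_exp M F Y w \<le> 1"
    using Y by (auto intro!: real_cond_exp_ge_c real_cond_exp_le_c)
  then show ?thesis
    by eventually_elim (simp add: clamp01_id)
qed

lemma unit_cond_exp_clamp01: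
  assumes sub: "subalgebra M F" and Ym[measurable]: "Y \<in> borel_measurable M"
    and Y: "\<And>w. w \<in> space M \<Longrightarrow> 0 \<le> Y w \<and> Y w \<le> 1"
  shows "unit_cond_exp M F Y (\<lambda>w. clamp01 (real_cond_exp M F Y w))"
  unfolding unit_cond_exp_def
proof (intro conjI allI impI ballI)
  interpret finite_measure_subalgebra M F
    by unfold_locales fact
  show "(\<lambda>w. clamp01 (real_cond_exp M F Y w)) \<in> borel_measurable F"
    by measurable
  fix h :: "'a \<Rightarrow> real" and B :: real assume hF: "h \<in> borel_measurable F" and hB: "\<forall>w\<in>space M. \<bar>h w\<bar> \<le> B"
  have [measurable]: "h \<in> borel_measurable M"
    using measurable_from_subalg[OF sub hF] .
  have "integrable M (\<lambda>w. h w * Y w)"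
  proof (rule integrable_bounded[where B=B])
    fix w assume w: "w \<in> space M"
    have "\<bar>h w * Y w\<bar> \<le> B * 1"
      unfolding abs_mult using hB w Y[OF w] by (intro mult_mono) auto
    then show "\<bar>h w * Y w\<bar> \<le> B" by simp
  qed measurable
  then have "(\<integral>w. h w * Y w \<partial>M) = (\<integral>w. h w * real_cond_exp M F Y w \<partial>M)"
    using real_cond_exp_intg(2)[OF _ hF] by simp
  also have "\<dots> = (\<integral>w. h w * clamp01 (real_cond_exp M F Y w) \<partial>M)"
    using real_cond_exp_AE_eq_clamp01[OF sub Ym Y] by (intro integral_cong_AE) auto
  finally show "(\<integral>w. h w * Y w \<partial>M) = (\<integral>w. h w * clamp01 (real_cond_exp M F Y w) \<partial>M)" .
qed simp_all

lemma unit_cond_exp_pythagoras: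
  assumes sub: "subalgebra M F" and [measurable]: "Y \<in> borel_measurable M"
    and Y: "\<And>w. w \<in> space M \<Longrightarrow> 0 \<le> Y w \<and> Y w \<le> 1"
    and W: "unit_cond_exp M F Y W"
    and VF: "V \<in> borel_measurable F" and V: "\<And>w. w \<in> space M \<Longrightarrow> 0 \<le> V w \<and> V w \<le> 1"
  shows "(\<integral>w. (Y w - V w)\<^sup>2 \<partial>M) = (\<integral>w. (Y w - W w)\<^sup>2 \<partial>M) + (\<integral>w. (W w - V w)\<^sup>2 \<partial>M)"
proof -
  have [measurable]: "W \<in> borel_measurable M" "V \<in> borel_measurable M"
    using unit_cond_exp_measurable[OF W sub] measurable_from_subalg[OF sub VF] by auto
  note W01 = unit_cond_exp_range[OF W]
  have orth: "(\<integral>w. (W w - V w) * Y w \<partial>M) = (\<integral>w. (W w - V w) * W w \<partial>M)"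
  proof (rule unit_cond_exp_integral_mult[OF W])
    show "(\<lambda>w. W w - V w) \<in> borel_measurable F"
      using W VF unfolding unit_cond_exp_def by (intro borel_measurable_diff) auto
    show "\<And>w. w \<in> space M \<Longrightarrow> \<bar>W w - V w\<bar> \<le> 1"
      using W01 V by (fastforce simp: abs_le_iff)
  qed
  have "integrable M (\<lambda>w. (Y w - W w)\<^sup>2)" "integrable M (\<lambda>w. (W w - V w)\<^sup>2)"
    "integrable M (\<lambda>w. (W w - V w) * Y w)" "integrable M (\<lambda>w. (W w - V w) * W w)"
    using Y V W01 power2_diff_unit_le_1 abs_diff_mult_unit_le_1
    by (auto intro!: integrable_bounded[where B=1])
  moreover have "(Y w - V w)\<^sup>2 = (Y w - W w)\<^sup>2 + (W w - V w)\<^sup>2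
      + 2 * ((W w - V w) * Y w) - 2 * ((W w - V w) * W w)" for w
    by (simp add: power2_eq_square algebra_simps)
  ultimately show ?thesis
    using orth by simp
qed

lemma unit_cond_exp_uniform_measure:
  assumes sub: "subalgebra M F" and A: "A \<in> sets F" and pos: "prob A > 0"
    and [measurable]: "Y \<in> borel_measurable M" and Y: "\<And>w. w \<in> space M \<Longrightarrow> 0 \<le> Y w \<and> Y w \<le> 1"
    and W: "unit_cond_exp M F Y W"
  shows "unit_cond_exp (uniform_measure M A) F Y W"
  unfolding unit_cond_exp_def space_uniform_measure
proof (intro conjI allI impI)
  have AM [measurable]: "A \<in> sets M"
    using A sub by (auto simp: subalgebra_def)
  have [measurable]: "W \<in> borel_measurable M"
    using unit_cond_exp_measurable[OF W sub] .
  fix h :: "'a \<Rightarrow> real" and B :: real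
  assume hF: "h \<in> borel_measurable F" and hB: "\<forall>w\<in>space M. \<bar>h w\<bar> \<le> B"
  have [measurable]: "h \<in> borel_measurable M"
    using measurable_from_subalg[OF sub hF] .
  have "(\<integral>w. indicator A w * h w * Y w \<partial>M) = (\<integral>w. indicator A w * h w * W w \<partial>M)"
  proof (rule unit_cond_exp_integral_mult[OF W])
    show "(\<lambda>w. indicator A w * h w) \<in> borel_measurable F"
      using A hF by measurable
    show "\<And>w. w \<in> space M \<Longrightarrow> \<bar>indicator A w * h w\<bar> \<le> B"
      using hB by (auto split: split_indicator)
  qed
  then show "(\<integral>w. h w * Y w \<partial>uniform_measure M A) = (\<integral>w. h w * W w \<partial>uniform_measure M A)"
    using pos by (simp add: integral_uniform_measure mult.assoc)
qed (use W in \<open>auto simp: unit_cond_exp_def\<close>)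

lemma variance_le_of_AE_interval:
  fixes f :: "'a \<Rightarrow> real"
  assumes [measurable]: "f \<in> borel_measurable M" and f: "AE w in M. lo \<le> f w \<and> f w \<le> lo + \<delta>"
  shows "variance f \<le> \<delta>\<^sup>2"
proof -
  have "AE w in M. norm (f w) \<le> \<bar>lo\<bar> + \<bar>\<delta>\<bar>"
    using f by eventually_elim auto
  then have int: "integrable M f"
    by (intro integrable_const_bound) auto
  have mean: "lo \<le> expectation f" "expectation f \<le> lo + \<delta>"
    using f by (auto intro!: integral_ge_const integral_le_const int)
  have dev: "AE w in M. (f w - expectation f)\<^sup>2 \<le> \<delta>\<^sup>2"
    using f by eventually_elim (use mean in \<open>auto simp: power2_le_iff_abs_le abs_le_iff\<close>)
  have "integrable M (\<lambda>w. (f w - expectation f)\<^sup>2)"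
    using dev by (intro integrable_const_bound[where B="\<delta>\<^sup>2"]) auto
  then show ?thesis
    using dev by (rule integral_le_const)
qed

lemma integral_eq_sum_level_sets:
  fixes f :: "'a \<Rightarrow> real" and C :: "'a \<Rightarrow> 'i"
  assumes K: "finite K" "\<And>w. w \<in> space M \<Longrightarrow> C w \<in> K"
    and level: "\<And>k. {w \<in> space M. C w = k} \<in> sets M" and f: "integrable M f"
  shows "(\<integral>w. f w \<partial>M) = (\<Sum>k\<in>K. \<integral>w. indicator {w \<in> space M. C w = k} w * f w \<partial>M)"
proof -
  have "(\<integral>w. f w \<partial>M) = (\<integral>w. (\<Sum>k\<in>K. indicator {w \<in> space M. C w = k} w * f w) \<partial>M)"
  proof (rule Bochner_Integration.integral_cong[OF refl])
    fix w assume "w \<in> space M"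
    then show "f w = (\<Sum>k\<in>K. indicator {w \<in> space M. C w = k} w * f w)"
      using K by (simp add: indicator_def if_distrib)
  qed
  also have "\<dots> = (\<Sum>k\<in>K. \<integral>w. indicator {w \<in> space M. C w = k} w * f w \<partial>M)"
    using level f by (intro Bochner_Integration.integral_sum) (simp add: integrable_real_mult_indicator mult.commute)
  finally show ?thesis .
qed

lemma exists_shift_crossing_prob_le:
  fixes X Z :: "'a \<Rightarrow> real"
  assumes [measurable]: "X \<in> borel_measurable M" "Z \<in> borel_measurable M"
    and int: "integrable M (\<lambda>w. \<bar>X w - Z w\<bar>)" and \<delta>: "\<delta> > 0" and e: "e > 0"
  shows "\<exists>u. prob {w \<in> space M. bin \<delta> u (X w) \<noteq> bin \<delta> u (Z w)}
           \<le> (\<integral>w. \<bar>X w - Z w\<bar> \<partial>M) / \<delta> + e"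
proof -
  obtain m :: nat where m: "1 / e < m"
    using reals_Archimedean2 by blast
  have m_pos: "m > 0"
    using m e by (metis divide_pos_pos of_nat_0_less_iff order_less_trans zero_less_one)
  have inv_m: "1 / m < e"
    using m e m_pos by (simp add: field_simps)
  define crossing where
    "crossing r = {w \<in> space M. bin \<delta> (r * \<delta> / m) (X w) \<noteq> bin \<delta> (r * \<delta> / m) (Z w)}" for r :: nat
  have [measurable]: "crossing r \<in> sets M" for r
    unfolding crossing_def by measurable
  have count: "(\<Sum>r<m. indicator (crossing r) w) \<le> m / \<delta> * \<bar>X w - Z w\<bar> + 1"
    if w: "w \<in> space M" for w
  proof -
    have shift: "(x - r * \<delta> / m) / \<delta> = x / \<delta> - r / m" for x and r :: nat
      using \<delta> by (simp add: field_simps)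
    have "(\<Sum>r<m. indicator (crossing r) w :: real)
        = (\<Sum>r<m. if \<lfloor>X w / \<delta> - r / m\<rfloor> \<noteq> \<lfloor>Z w / \<delta> - r / m\<rfloor> then 1 else 0)"
      by (intro sum.cong refl) (simp add: crossing_def bin_def shift w)
    also have "\<dots> = card {r \<in> {..<m}. \<lfloor>X w / \<delta> - r / m\<rfloor> \<noteq> \<lfloor>Z w / \<delta> - r / m\<rfloor>}"
      by (simp add: sum.inter_filter[symmetric])
    also have "\<dots> \<le> m * \<bar>X w / \<delta> - Z w / \<delta>\<bar> + 1"
      by (rule card_shift_crossings_le_abs[OF m_pos])
    also have "\<bar>X w / \<delta> - Z w / \<delta>\<bar> = \<bar>X w - Z w\<bar> / \<delta>"
      using \<delta> by (simp add: diff_divide_distrib[symmetric])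
    finally show ?thesis
      by simp
  qed
  have int_indicator: "integrable M (indicator (crossing r) :: 'a \<Rightarrow> real)" for r
    by (rule integrable_bounded[where B=1]) auto
  have "(\<Sum>r<m. prob (crossing r)) = (\<integral>w. (\<Sum>r<m. indicator (crossing r) w) \<partial>M)"
    using int_indicator by (subst Bochner_Integration.integral_sum) auto
  also have "\<dots> \<le> (\<integral>w. m / \<delta> * \<bar>X w - Z w\<bar> + 1 \<partial>M)"
    using count int int_indicator by (intro integral_mono) auto
  also have "\<dots> = m / \<delta> * (\<integral>w. \<bar>X w - Z w\<bar> \<partial>M) + 1"
    using int by (simp add: prob_space)
  finally have sum_le: "(\<Sum>r<m. prob (crossing r)) \<le> m / \<delta> * (\<integral>w. \<bar>X w - Z w\<bar> \<partial>M) + 1" .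
  have "\<exists>r<m. prob (crossing r) \<le> (\<integral>w. \<bar>X w - Z w\<bar> \<partial>M) / \<delta> + 1 / m"
  proof (rule ccontr)
    assume "\<not> ?thesis"
    then have "(\<Sum>r<m. (\<integral>w. \<bar>X w - Z w\<bar> \<partial>M) / \<delta> + 1 / m) < (\<Sum>r<m. prob (crossing r))"
      using m_pos by (intro sum_strict_mono) auto
    also have "(\<Sum>r<m. (\<integral>w. \<bar>X w - Z w\<bar> \<partial>M) / \<delta> + 1 / m) = m / \<delta> * (\<integral>w. \<bar>X w - Z w\<bar> \<partial>M) + 1"
      using m_pos by (simp add: field_simps)
    finally show False
      using sum_le by simp
  qed
  then obtain r where "prob (crossing r) \<le> (\<integral>w. \<bar>X w - Z w\<bar> \<partial>M) / \<delta> + 1 / m"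
    by blast
  then show ?thesis
    using inv_m unfolding crossing_def by (intro exI[of _ "r * \<delta> / m"]) simp
qed

lemma integral_abs_le_sqrt_integral_power2:
  fixes f :: "'a \<Rightarrow> real"
  assumes "integrable M f" "integrable M (\<lambda>w. (f w)\<^sup>2)"
  shows "(\<integral>w. \<bar>f w\<bar> \<partial>M) \<le> sqrt (\<integral>w. (f w)\<^sup>2 \<partial>M)"
proof -
  define e where "e = (\<integral>w. \<bar>f w\<bar> \<partial>M)"
  have "0 \<le> (\<integral>w. (\<bar>f w\<bar> - e)\<^sup>2 \<partial>M)"
    by simp
  also have "\<dots> = (\<integral>w. (f w)\<^sup>2 - 2 * e * \<bar>f w\<bar> + e\<^sup>2 \<partial>M)"
    by (simp add: power2_eq_square algebra_simps)
  also have "\<dots> = (\<integral>w. (f w)\<^sup>2 \<partial>M) - e\<^sup>2"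
    using assms by (simp add: e_def prob_space power2_eq_square)
  finally show ?thesis
    by (simp add: e_def real_le_rsqrt)
qed

end

locale information_structure = prob_space M
  for M :: "'w measure" +
  fixes SS :: "'s measure" and TT :: "'t measure"
    and sig :: "'w \<Rightarrow> 's" and tau :: "'w \<Rightarrow> 't" and Y :: "'w \<Rightarrow> real"
  assumes sig_measurable [measurable]: "sig \<in> M \<rightarrow>\<^sub>M SS"
    and tau_measurable [measurable]: "tau \<in> M \<rightarrow>\<^sub>M TT"
    and Y_measurable [measurable]: "Y \<in> borel_measurable M"
    and Y_range: "\<And>w. w \<in> space M \<Longrightarrow> 0 \<le> Y w \<and> Y w \<le> 1"
begin

abbreviation "F_sig \<equiv> vimage_algebra (space M) sig SS"
abbreviation "F_tau \<equiv> vimage_algebra (space M) tau TT"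
abbreviation "F_pair \<equiv> vimage_algebra (space M) (\<lambda>w. (sig w, tau w)) (SS \<Otimes>\<^sub>M TT)"

definition mu_sig :: "'w \<Rightarrow> real" where
  "mu_sig w = clamp01 (cexp_rv M sig SS Y w)"

definition mu_tau :: "'w \<Rightarrow> real" where
  "mu_tau w = clamp01 (cexp_rv M tau TT Y w)"

definition mu_pair :: "'w \<Rightarrow> real" where
  "mu_pair w = clamp01 (cexp_rv M (\<lambda>w. (sig w, tau w)) (SS \<Otimes>\<^sub>M TT) Y w)"

definition mu_tau_given :: "'w set \<Rightarrow> 'w \<Rightarrow> real" where
  "mu_tau_given A w = clamp01 (cexp_rv (uniform_measure M A) tau TT Y w)"

lemma pair_measurable [measurable]: "(\<lambda>w. (sig w, tau w)) \<in> M \<rightarrow>\<^sub>M SS \<Otimes>\<^sub>M TT"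
  by measurable

lemma subalgebra_pair_sig: "subalgebra F_pair F_sig"
  and subalgebra_pair_tau: "subalgebra F_pair F_tau"
proof -
  have "(\<lambda>w. (sig w, tau w)) \<in> F_pair \<rightarrow>\<^sub>M SS \<Otimes>\<^sub>M TT"
    by (rule measurable_vimage_algebra1) (use measurable_space[OF pair_measurable] in auto)
  then have "sig \<in> F_pair \<rightarrow>\<^sub>M SS" "tau \<in> F_pair \<rightarrow>\<^sub>M TT"
    using measurable_compose[OF _ measurable_fst] measurable_compose[OF _ measurable_snd] by force+
  then show "subalgebra F_pair F_sig" "subalgebra F_pair F_tau"
    using sets_image_in_sets[of F_pair "space M" sig SS] sets_image_in_sets[of F_pair "space M" tau TT]
    unfolding subalgebra_def by auto
qed

lemma unit_cond_exp_mu_sig: "unit_cond_exp M F_sig Y mu_sig"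
  and unit_cond_exp_mu_tau: "unit_cond_exp M F_tau Y mu_tau"
  and unit_cond_exp_mu_pair: "unit_cond_exp M F_pair Y mu_pair"
  unfolding mu_sig_def mu_tau_def mu_pair_def cexp_rv_def
  by (rule unit_cond_exp_clamp01[OF subalgebra_vimage_algebra Y_measurable Y_range]; measurable)+

lemma AE_cexp_rv_eq_mu:
  "AE w in M. cexp_rv M sig SS Y w = mu_sig w"
  "AE w in M. cexp_rv M tau TT Y w = mu_tau w"
  "AE w in M. cexp_rv M (\<lambda>w. (sig w, tau w)) (SS \<Otimes>\<^sub>M TT) Y w = mu_pair w"
  unfolding mu_sig_def mu_tau_def mu_pair_def cexp_rv_def
  by (rule real_cond_exp_AE_eq_clamp01[OF subalgebra_vimage_algebra Y_measurable Y_range]; measurable)+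

lemma mu_measurable [measurable]:
  "mu_sig \<in> borel_measurable F_sig" "mu_tau \<in> borel_measurable F_tau"
  "mu_sig \<in> borel_measurable M" "mu_tau \<in> borel_measurable M" "mu_pair \<in> borel_measurable M"
  using unit_cond_exp_measurable[OF unit_cond_exp_mu_sig] unit_cond_exp_measurable[OF unit_cond_exp_mu_tau]
    unit_cond_exp_measurable[OF unit_cond_exp_mu_pair] subalgebra_vimage_algebra[OF sig_measurable]
    subalgebra_vimage_algebra[OF tau_measurable] subalgebra_vimage_algebra[OF pair_measurable]
    unit_cond_exp_mu_sig unit_cond_exp_mu_tau
  by (auto simp: unit_cond_exp_def)

lemma mu_range:
  "0 \<le> mu_sig w" "mu_sig w \<le> 1" "0 \<le> mu_tau w" "mu_tau w \<le> 1" "0 \<le> mu_pair w" "mu_pair w \<le> 1"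
  by (simp_all add: mu_sig_def mu_tau_def mu_pair_def)

lemma mu_tau_given_measurable [measurable]:
  "mu_tau_given A \<in> borel_measurable F_tau" "mu_tau_given A \<in> borel_measurable M"
  unfolding mu_tau_given_def[abs_def] cexp_rv_def
  by (simp_all add: measurable_cong_sets[OF sets_uniform_measure refl, symmetric])

lemma mu_tau_given_range: "0 \<le> mu_tau_given A w" "mu_tau_given A w \<le> 1"
  by (simp_all add: mu_tau_given_def)

lemma rectangle_substitutes_strip:
  assumes "rectangle_substitutes M SS TT sig tau Y" and S: "S \<in> sets SS"
    and pos: "prob (sig -` S \<inter> space M) > 0"
  defines "MA \<equiv> uniform_measure M (sig -` S \<inter> space M)"
  shows "(\<integral>w. (Y w - cexp_rv MA tau TT Y w)\<^sup>2 \<partial>MA)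
           - (\<integral>w. (Y w - cexp_rv M (\<lambda>w. (sig w, tau w)) (SS \<Otimes>\<^sub>M TT) Y w)\<^sup>2 \<partial>MA)
         \<le> (\<integral>w. (Y w - (\<integral>v. Y v \<partial>MA))\<^sup>2 \<partial>MA) - (\<integral>w. (Y w - cexp_rv M sig SS Y w)\<^sup>2 \<partial>MA)"
proof -
  have strip: "rect_event M sig tau S (space TT) = sig -` S \<inter> space M"
    and whole: "rect_event M sig tau (space SS) (space TT) = space M"
    unfolding rect_event_def using measurable_space[OF tau_measurable] measurable_space[OF sig_measurable]
    by auto
  show ?thesis
    using assms(1) S pos unfolding rectangle_substitutes_def
    by (auto dest!: bspec[of _ _ S] bspec[of _ _ "space TT"]
             simp: Let_def strip whole uniform_measure_space_eq MA_def)
qed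

lemma sets_sig_eq_vimage:
  assumes "A \<in> sets F_sig"
  obtains S where "S \<in> sets SS" "A = sig -` S \<inter> space M"
  using assms sets_vimage_algebra2[of sig "space M" SS] measurable_space[OF sig_measurable] by auto

lemma sets_sig_subset: "A \<in> sets F_sig \<Longrightarrow> A \<in> sets M"
  using subalgebra_vimage_algebra[OF sig_measurable] by (auto simp: subalgebra_def)

lemma rectangle_substitutes_sig_event:
  assumes RS: "rectangle_substitutes M SS TT sig tau Y" and A_sig: "A \<in> sets F_sig"
    and pos: "prob A > 0"
  defines "MA \<equiv> uniform_measure M A"
  shows "(\<integral>w. (Y w - mu_tau_given A w)\<^sup>2 \<partial>MA) - (\<integral>w. (Y w - mu_pair w)\<^sup>2 \<partial>MA)
      \<le> (\<integral>w. (Y w - (\<integral>v. Y v \<partial>MA))\<^sup>2 \<partial>MA) - (\<integral>w. (Y w - mu_sig w)\<^sup>2 \<partial>MA)"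
proof -
  obtain S where S: "S \<in> sets SS" and A_eq: "A = sig -` S \<inter> space M"
    using A_sig by (rule sets_sig_eq_vimage)
  have A [measurable]: "A \<in> sets M"
    using A_sig by (rule sets_sig_subset)
  interpret MA: prob_space MA
    unfolding MA_def using pos by (intro prob_space_uniform_measure) (auto simp: emeasure_eq_measure)
  have meas_MA: "f \<in> borel_measurable MA \<longleftrightarrow> f \<in> borel_measurable M" for f :: "'w \<Rightarrow> real"
    unfolding MA_def by (simp add: measurable_cong_sets[OF sets_uniform_measure refl])
  have [measurable]: "cexp_rv MA tau TT Y \<in> borel_measurable MA"
    by (simp add: cexp_rv_def MA_def)
  have [measurable]: "mu_tau_given A \<in> borel_measurable MA" "mu_sig \<in> borel_measurable MA"
    "mu_pair \<in> borel_measurable MA" "cexp_rv M sig SS Y \<in> borel_measurable MA"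
    "cexp_rv M (\<lambda>w. (sig w, tau w)) (SS \<Otimes>\<^sub>M TT) Y \<in> borel_measurable MA" "Y \<in> borel_measurable MA"
    unfolding meas_MA by (simp_all add: cexp_rv_def)
  have "AE w in MA. cexp_rv MA tau TT Y w = mu_tau_given A w"
    using MA.real_cond_exp_AE_eq_clamp01[OF _ _ Y_range] subalgebra_vimage_algebra[OF tau_measurable]
    by (simp add: mu_tau_given_def cexp_rv_def MA_def subalgebra_def)
  then have "(\<integral>w. (Y w - cexp_rv MA tau TT Y w)\<^sup>2 \<partial>MA) = (\<integral>w. (Y w - mu_tau_given A w)\<^sup>2 \<partial>MA)"
    by (intro integral_cong_AE) (auto elim: eventually_mono)
  moreover have "AE w in MA. cexp_rv M sig SS Y w = mu_sig w"
    "AE w in MA. cexp_rv M (\<lambda>w. (sig w, tau w)) (SS \<Otimes>\<^sub>M TT) Y w = mu_pair w"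
    unfolding MA_def using AE_cexp_rv_eq_mu by (auto intro!: AE_uniform_measureI)
  then have "(\<integral>w. (Y w - cexp_rv M (\<lambda>w. (sig w, tau w)) (SS \<Otimes>\<^sub>M TT) Y w)\<^sup>2 \<partial>MA)
      = (\<integral>w. (Y w - mu_pair w)\<^sup>2 \<partial>MA)"
    "(\<integral>w. (Y w - cexp_rv M sig SS Y w)\<^sup>2 \<partial>MA) = (\<integral>w. (Y w - mu_sig w)\<^sup>2 \<partial>MA)"
    by (auto intro!: integral_cong_AE elim: eventually_mono)
  ultimately show ?thesis
    using rectangle_substitutes_strip[OF RS S] pos by (simp add: MA_def A_eq)
qed

text \<open>By Pythagoras, the two sides of the rectangle inequality on the event A are the mean squared
  distance between \<mu>\<sigma>\<tau> and the \<tau>-predictor conditioned on A, and the variance of \<mu>\<sigma> on A.\<close>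
lemma cell_bound:
  assumes RS: "rectangle_substitutes M SS TT sig tau Y" and A_sig: "A \<in> sets F_sig"
    and pos: "prob A > 0" and cell: "\<And>w. w \<in> A \<Longrightarrow> lo \<le> mu_sig w \<and> mu_sig w \<le> lo + \<delta>"
  shows "(\<integral>w. (mu_pair w - mu_tau_given A w)\<^sup>2 \<partial>uniform_measure M A) \<le> \<delta>\<^sup>2"
proof -
  define MA where "MA = uniform_measure M A"
  define c where "c = (\<integral>v. Y v \<partial>MA)"
  have A [measurable]: "A \<in> sets M"
    using A_sig by (rule sets_sig_subset)
  interpret MA: prob_space MA
    unfolding MA_def using pos by (intro prob_space_uniform_measure) (auto simp: emeasure_eq_measure)
  have sub_MA: "subalgebra MA (vimage_algebra (space M) f N)" if "f \<in> M \<rightarrow>\<^sub>M N" for f and N :: "'x measure"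
    using subalgebra_vimage_algebra[OF that] by (simp add: MA_def subalgebra_def)
  have Y_MA [measurable]: "Y \<in> borel_measurable MA"
    by (simp add: MA_def)
  have Y_MA_range: "\<And>w. w \<in> space MA \<Longrightarrow> 0 \<le> Y w \<and> Y w \<le> 1"
    using Y_range by (simp add: MA_def)
  have X: "unit_cond_exp MA F_sig Y mu_sig"
    unfolding MA_def using subalgebra_vimage_algebra[OF sig_measurable] A_sig pos Y_measurable Y_range
    by (rule unit_cond_exp_uniform_measure[OF _ _ _ _ _ unit_cond_exp_mu_sig])
  have W: "unit_cond_exp MA F_pair Y mu_pair"
    unfolding MA_def using subalgebra_vimage_algebra[OF pair_measurable] _ pos Y_measurable Y_range
    by (rule unit_cond_exp_uniform_measure[OF _ _ _ _ _ unit_cond_exp_mu_pair])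
      (use A_sig subalgebra_pair_sig in \<open>auto simp: subalgebra_def\<close>)
  have "(\<integral>w. (Y w - mu_tau_given A w)\<^sup>2 \<partial>MA)
      = (\<integral>w. (Y w - mu_pair w)\<^sup>2 \<partial>MA) + (\<integral>w. (mu_pair w - mu_tau_given A w)\<^sup>2 \<partial>MA)"
    using measurable_from_subalg[OF subalgebra_pair_tau mu_tau_given_measurable(1)] mu_tau_given_range
    by (intro MA.unit_cond_exp_pythagoras[OF sub_MA[OF pair_measurable] Y_MA Y_MA_range W]) auto
  moreover have "(\<integral>w. (Y w - c)\<^sup>2 \<partial>MA)
      = (\<integral>w. (Y w - mu_sig w)\<^sup>2 \<partial>MA) + (\<integral>w. (mu_sig w - c)\<^sup>2 \<partial>MA)"
  proof (rule MA.unit_cond_exp_pythagoras[OF sub_MA[OF sig_measurable] Y_MA Y_MA_range X])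
    show "\<And>w. w \<in> space MA \<Longrightarrow> 0 \<le> c \<and> c \<le> 1"
      using Y_MA_range unfolding c_def by (auto intro!: MA.integral_ge_const MA.integral_le_const
        MA.integrable_bounded[where B=1])
  qed auto
  moreover have "c = (\<integral>w. mu_sig w \<partial>MA)"
    using unit_cond_exp_integral_mult[OF X, of "\<lambda>_. 1" 1] by (simp add: c_def)
  moreover have "MA.variance mu_sig \<le> \<delta>\<^sup>2"
  proof (rule MA.variance_le_of_AE_interval)
    show "AE w in MA. lo \<le> mu_sig w \<and> mu_sig w \<le> lo + \<delta>"
      unfolding MA_def using cell A by (intro AE_uniform_measureI) auto
  qed (simp add: MA_def)
  ultimately show ?thesis
    using rectangle_substitutes_sig_event[OF RS A_sig pos] by (simp add: MA_def c_def)
qed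

lemma cell_bound_indicator:
  assumes RS: "rectangle_substitutes M SS TT sig tau Y" and A_sig: "A \<in> sets F_sig"
    and cell: "\<And>w. w \<in> A \<Longrightarrow> lo \<le> mu_sig w \<and> mu_sig w \<le> lo + \<delta>"
  shows "(\<integral>w. indicator A w * (mu_pair w - mu_tau_given A w)\<^sup>2 \<partial>M) \<le> \<delta>\<^sup>2 * prob A"
proof -
  have [measurable]: "A \<in> sets M"
    using A_sig by (rule sets_sig_subset)
  show ?thesis
  proof (cases "prob A > 0")
    case True
    then show ?thesis
      using cell_bound[OF RS A_sig True cell]
      by (simp add: integral_uniform_measure divide_le_eq mult.commute)
  next
    case False
    have "(\<integral>w. indicator A w * (mu_pair w - mu_tau_given A w)\<^sup>2 \<partial>M) \<le> (\<integral>w. indicator A w \<partial>M)"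
      using power2_diff_unit_le_1[OF mu_range(5,6) mu_tau_given_range]
      by (intro integral_mono integrable_bounded[where B=1]) (auto simp: indicator_def)
    then show ?thesis
      using False measure_nonneg[of M A] by simp
  qed
qed

definition cell :: "real \<Rightarrow> real \<Rightarrow> int \<Rightarrow> 'w set" where
  "cell \<delta> u k = {w \<in> space M. bin \<delta> u (mu_sig w) = k}"

lemma cell_sets_sig: "cell \<delta> u k \<in> sets F_sig"
proof -
  have "{w \<in> space F_sig. bin \<delta> u (mu_sig w) = k} \<in> sets F_sig"
    by measurable
  then show ?thesis
    by (simp add: cell_def)
qed

lemma cell_sets [measurable]: "cell \<delta> u k \<in> sets M"
  using cell_sets_sig by (rule sets_sig_subset)

definition cell_predictor :: "real \<Rightarrow> real \<Rightarrow> 'w \<Rightarrow> real" where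
  "cell_predictor \<delta> u w = mu_tau_given (cell \<delta> u (bin \<delta> u (mu_sig w))) w"

lemma cell_predictor_measurable [measurable]: "cell_predictor \<delta> u \<in> borel_measurable M"
proof -
  have "(\<lambda>w. bin \<delta> u (mu_sig w)) \<in> M \<rightarrow>\<^sub>M count_space UNIV"
    by measurable
  then show ?thesis
    unfolding cell_predictor_def[abs_def] by (auto intro: measurable_compose_countable)
qed

lemma cell_predictor_range: "0 \<le> cell_predictor \<delta> u w" "cell_predictor \<delta> u w \<le> 1"
  by (simp_all add: cell_predictor_def mu_tau_given_range)

lemma pair_cell_predictor_distance_le:
  assumes RS: "rectangle_substitutes M SS TT sig tau Y" and \<delta>: "\<delta> > 0"
  shows "(\<integral>w. (mu_pair w - cell_predictor \<delta> u w)\<^sup>2 \<partial>M) \<le> \<delta>\<^sup>2"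
proof -
  define K where "K = {bin \<delta> u 0 .. bin \<delta> u 1}"
  have level: "\<And>w. w \<in> space M \<Longrightarrow> bin \<delta> u (mu_sig w) \<in> K"
    "\<And>k. {w \<in> space M. bin \<delta> u (mu_sig w) = k} \<in> sets M"
    using bin_unit_interval[OF \<delta>] mu_range cell_sets by (auto simp: K_def cell_def)
  have "integrable M (\<lambda>w. (mu_pair w - cell_predictor \<delta> u w)\<^sup>2)"
    using power2_diff_unit_le_1 mu_range cell_predictor_range
    by (intro integrable_bounded[where B=1]) auto
  then have "(\<integral>w. (mu_pair w - cell_predictor \<delta> u w)\<^sup>2 \<partial>M)
      = (\<Sum>k\<in>K. \<integral>w. indicator (cell \<delta> u k) w * (mu_pair w - cell_predictor \<delta> u w)\<^sup>2 \<partial>M)"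
    unfolding cell_def by (intro integral_eq_sum_level_sets[OF _ level]) (simp add: K_def)
  also have "\<dots> = (\<Sum>k\<in>K. \<integral>w. indicator (cell \<delta> u k) w * (mu_pair w - mu_tau_given (cell \<delta> u k) w)\<^sup>2 \<partial>M)"
    by (intro sum.cong refl Bochner_Integration.integral_cong)
       (auto simp: cell_predictor_def cell_def indicator_def)
  also have "\<dots> \<le> (\<Sum>k\<in>K. \<delta>\<^sup>2 * prob (cell \<delta> u k))"
  proof (intro sum_mono cell_bound_indicator[OF RS cell_sets_sig])
    fix k w assume "w \<in> cell \<delta> u k"
    then show "u + k * \<delta> \<le> mu_sig w \<and> mu_sig w \<le> u + k * \<delta> + \<delta>"
      using bin_eqD[OF \<delta>] by (auto simp: cell_def)
  qed
  also have "\<dots> = \<delta>\<^sup>2"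
    using integral_eq_sum_level_sets[OF _ level, of "\<lambda>_. 1"]
    by (simp add: K_def cell_def sum_distrib_left[symmetric] prob_space Int_absorb2)
  finally show ?thesis .
qed

lemma pair_tau_distance_le_crossing:
  assumes RS: "rectangle_substitutes M SS TT sig tau Y" and \<delta>: "\<delta> > 0"
  shows "(\<integral>w. (mu_pair w - mu_tau w)\<^sup>2 \<partial>M)
    \<le> 2 * \<delta>\<^sup>2 + 2 * prob {w \<in> space M. bin \<delta> u (mu_sig w) \<noteq> bin \<delta> u (mu_tau w)}"
proof -
  define V where "V = cell_predictor \<delta> u"
  define G where "G w = mu_tau_given (cell \<delta> u (bin \<delta> u (mu_tau w))) w" for w
  define crossing where "crossing = {w \<in> space M. bin \<delta> u (mu_sig w) \<noteq> bin \<delta> u (mu_tau w)}"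
  have [measurable]: "G \<in> borel_measurable F_tau" "G \<in> borel_measurable M"
  proof -
    have "(\<lambda>w. bin \<delta> u (mu_tau w)) \<in> F_tau \<rightarrow>\<^sub>M count_space UNIV"
      "(\<lambda>w. bin \<delta> u (mu_tau w)) \<in> M \<rightarrow>\<^sub>M count_space UNIV"
      by measurable
    then show "G \<in> borel_measurable F_tau" "G \<in> borel_measurable M"
      unfolding G_def by (auto intro: measurable_compose_countable)
  qed
  have V_range: "0 \<le> V w \<and> V w \<le> 1" and G_range: "0 \<le> G w \<and> G w \<le> 1" for w
    by (simp_all add: V_def G_def cell_predictor_range mu_tau_given_range)
  have int_WV: "integrable M (\<lambda>w. (mu_pair w - V w)\<^sup>2)"
    and int_VG: "integrable M (\<lambda>w. (V w - G w)\<^sup>2)"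
    and int_WG: "integrable M (\<lambda>w. (mu_pair w - G w)\<^sup>2)"
    using power2_diff_unit_le_1 mu_range V_range G_range
    by (auto intro!: integrable_bounded[where B=1] simp: V_def)
  have VG: "(\<integral>w. (V w - G w)\<^sup>2 \<partial>M) \<le> prob crossing"
  proof -
    have [measurable]: "crossing \<in> sets M"
      unfolding crossing_def by measurable
    have "(\<integral>w. (V w - G w)\<^sup>2 \<partial>M) \<le> (\<integral>w. indicator crossing w \<partial>M)"
    proof (rule integral_mono[OF int_VG])
      fix w assume "w \<in> space M"
      then show "(V w - G w)\<^sup>2 \<le> indicator crossing w"
        using power2_diff_unit_le_1 V_range G_range
        by (cases "w \<in> crossing") (auto simp: crossing_def V_def G_def cell_predictor_def)
    qed (auto intro: integrable_bounded[where B=1])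
    then show ?thesis
      by simp
  qed
  have "(\<integral>w. (mu_pair w - G w)\<^sup>2 \<partial>M)
      \<le> (\<integral>w. 2 * (mu_pair w - V w)\<^sup>2 + 2 * (V w - G w)\<^sup>2 \<partial>M)"
    using int_WG int_WV int_VG power2_diff_le_twice_sum by (intro integral_mono) auto
  also have "\<dots> = 2 * (\<integral>w. (mu_pair w - V w)\<^sup>2 \<partial>M) + 2 * (\<integral>w. (V w - G w)\<^sup>2 \<partial>M)"
    using int_WV int_VG by simp
  finally have WG: "(\<integral>w. (mu_pair w - G w)\<^sup>2 \<partial>M) \<le> 2 * \<delta>\<^sup>2 + 2 * prob crossing"
    using pair_cell_predictor_distance_le[OF RS \<delta>, of u] VG unfolding V_def by linarith
  have "(\<integral>w. (mu_pair w - G w)\<^sup>2 \<partial>M)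
      = (\<integral>w. (mu_pair w - mu_tau w)\<^sup>2 \<partial>M) + (\<integral>w. (mu_tau w - G w)\<^sup>2 \<partial>M)"
    using unit_cond_exp_tower[OF subalgebra_pair_tau unit_cond_exp_mu_pair unit_cond_exp_mu_tau]
      mu_range G_range
    by (intro unit_cond_exp_pythagoras[OF subalgebra_vimage_algebra[OF tau_measurable]]) auto
  moreover have "0 \<le> (\<integral>w. (mu_tau w - G w)\<^sup>2 \<partial>M)"
    by simp
  ultimately show ?thesis
    using WG unfolding crossing_def by linarith
qed

lemma pair_tau_distance_le_powr:
  assumes RS: "rectangle_substitutes M SS TT sig tau Y"
  shows "(\<integral>w. (mu_pair w - mu_tau w)\<^sup>2 \<partial>M) \<le> 4 * (\<integral>w. (mu_sig w - mu_tau w)\<^sup>2 \<partial>M) powr (1/3)"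
proof (rule le_powr_third_of_tradeoff)
  show "0 \<le> (\<integral>w. (mu_sig w - mu_tau w)\<^sup>2 \<partial>M)"
    by simp
  fix \<delta> :: real assume \<delta>: "\<delta> > 0"
  have int_diff: "integrable M (\<lambda>w. mu_sig w - mu_tau w)"
  proof (rule integrable_bounded[where B=1])
    show "\<bar>mu_sig w - mu_tau w\<bar> \<le> 1" for w
      using mu_range[of w] by auto
  qed simp
  have int_square: "integrable M (\<lambda>w. (mu_sig w - mu_tau w)\<^sup>2)"
    using mu_range power2_diff_unit_le_1 by (auto intro!: integrable_bounded[where B=1])
  have "(\<integral>w. (mu_pair w - mu_tau w)\<^sup>2 \<partial>M) \<le> 2 * \<delta>\<^sup>2 + 2 * ((\<integral>w. \<bar>mu_sig w - mu_tau w\<bar> \<partial>M) / \<delta>)"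
  proof (rule field_le_epsilon)
    fix e :: real assume "e > 0"
    then obtain u where "prob {w \<in> space M. bin \<delta> u (mu_sig w) \<noteq> bin \<delta> u (mu_tau w)}
        \<le> (\<integral>w. \<bar>mu_sig w - mu_tau w\<bar> \<partial>M) / \<delta> + e / 2"
      using exists_shift_crossing_prob_le[OF _ _ integrable_abs[OF int_diff] \<delta>, of "e / 2"] by auto
    then show "(\<integral>w. (mu_pair w - mu_tau w)\<^sup>2 \<partial>M)
        \<le> 2 * \<delta>\<^sup>2 + 2 * ((\<integral>w. \<bar>mu_sig w - mu_tau w\<bar> \<partial>M) / \<delta>) + e"
      using pair_tau_distance_le_crossing[OF RS \<delta>, of u] by linarith
  qed
  also have "\<dots> \<le> 2 * \<delta>\<^sup>2 + 2 * sqrt (\<integral>w. (mu_sig w - mu_tau w)\<^sup>2 \<partial>M) / \<delta>"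
    using integral_abs_le_sqrt_integral_power2[OF int_diff int_square] \<delta>
    by (simp add: divide_right_mono)
  finally show "(\<integral>w. (mu_pair w - mu_tau w)\<^sup>2 \<partial>M)
      \<le> 2 * \<delta>\<^sup>2 + 2 * sqrt (\<integral>w. (mu_sig w - mu_tau w)\<^sup>2 \<partial>M) / \<delta>" .
qed

end

theorem lemma3p2:
  fixes M :: "'w measure" and SS :: "'s measure" and TT :: "'t measure"
    and sig :: "'w \<Rightarrow> 's" and tau :: "'w \<Rightarrow> 't" and Y :: "'w \<Rightarrow> real"
  assumes "prob_space M"
    and "sig \<in> M \<rightarrow>\<^sub>M SS" and "tau \<in> M \<rightarrow>\<^sub>M TT"
    and "Y \<in> borel_measurable M"
    and "\<And>w. w \<in> space M \<Longrightarrow> 0 \<le> Y w \<and> Y w \<le> 1"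
    and "rectangle_substitutes M SS TT sig tau Y"
  shows "(\<integral>w. (cexp_rv M (\<lambda>w. (sig w, tau w)) (SS \<Otimes>\<^sub>M TT) Y w - cexp_rv M tau TT Y w)\<^sup>2 \<partial>M)
           \<le> 6 * (\<integral>w. (cexp_rv M sig SS Y w - cexp_rv M tau TT Y w)\<^sup>2 \<partial>M) powr (1/3)"
proof -
  interpret information_structure M SS TT sig tau Y
    using assms(1-5) by (auto simp: information_structure_def information_structure_axioms_def)
  have "(\<integral>w. (cexp_rv M (\<lambda>w. (sig w, tau w)) (SS \<Otimes>\<^sub>M TT) Y w - cexp_rv M tau TT Y w)\<^sup>2 \<partial>M)
      = (\<integral>w. (mu_pair w - mu_tau w)\<^sup>2 \<partial>M)"
    "(\<integral>w. (cexp_rv M sig SS Y w - cexp_rv M tau TT Y w)\<^sup>2 \<partial>M) = (\<integral>w. (mu_sig w - mu_tau w)\<^sup>2 \<partial>M)"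
    using AE_cexp_rv_eq_mu by (auto intro!: integral_cong_AE simp: cexp_rv_def elim: eventually_mono)
  moreover have "(\<integral>w. (mu_pair w - mu_tau w)\<^sup>2 \<partial>M)
      \<le> 6 * (\<integral>w. (mu_sig w - mu_tau w)\<^sup>2 \<partial>M) powr (1/3)"
    using pair_tau_distance_le_powr[OF assms(6)]
      powr_ge_zero[of "\<integral>w. (mu_sig w - mu_tau w)\<^sup>2 \<partial>M" "1/3"] by linarith
  ultimately show ?thesis
    by simp
qed

end
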